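(* Let $m\geq 2$, $\mathcal M=\{1,\dots,m\}$, $X_{\mathcal M}=(X_1,\dots,X_m)$ a discrete memoryless multiple source with finite alphabets, and $\mathcal A\subseteq\mathcal M$ with $|\mathcal A|\geq 2$. Then $C_{\mathrm{SK}}(\mathcal A)=I(\mathcal A)$ if and only if there exist $k$ with $2\leq k\leq|\mathcal A|$, a tuple $(\mathcal C_1,\dots,\mathcal C_k)\in\mathscr P_k(\mathcal A)$, and a rate tuple $R_{\mathcal M}\in\mathscr R(\mathcal A)$ such that $\mathrm{SW}(R_{\mathcal M},\mathcal C_i^c)=0$ for all $i\in\{1,\dots,k\}$.
   Context: Define $\mathscr B(\mathcal A):=\{\mathcal B\subsetneq\mathcal M:\ \mathcal B\neq\emptyset,\ \mathcal B\not\supseteq\mathcal A\}$. Let $h(\mathcal B):=H(X_{\mathcal B}\mid X_{\mathcal B^c})$ for $\mathcal B\subseteq\mathcal M$ (complements in $\mathcal M$; $h(\mathcal M)=H(X_{\mathcal M})$). For $R_{\mathcal M}=(R_1,\dots,R_m)\in\mathbb R^m$ let $\mathrm{SW}(R_{\mathcal M},\mathcal B):=\sum_{j\in\mathcal B}R_j-h(\mathcal B)$, and $\mathscr R(\mathcal A):=\{R_{\mathcal M}\in\mathbb R^m:\ \mathrm{SW}(R_{\mathcal M},\mathcal B)\geq 0\ \forall\,\mathcal B\in\mathscr B(\mathcal A)\}$. Let $R_{\mathrm{CO}}(\mathcal A):=\min_{R_{\mathcal M}\in\mathscr R(\mathcal A)}\sum_i R_i$ and $C_{\mathrm{SK}}(\mathcal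 A):=H(X_{\mathcal M})-R_{\mathrm{CO}}(\mathcal A)$. For $k\geq2$, $\mathscr P_k(\mathcal A)$ is the set of tuples $(\mathcal C_1,\dots,\mathcal C_k)$ of pairwise disjoint subsets of $\mathcal M$ with union $\mathcal M$ and $\mathcal C_i\cap\mathcal A\neq\emptyset$ for all $i$; $I(\mathcal C_1,\dots,\mathcal C_k):=\frac1{k-1}\big(\sum_{i=1}^kH(X_{\mathcal C_i})-H(X_{\mathcal M})\big)$; and $I(\mathcal A):=\min\{I(\mathcal C_1,\dots,\mathcal C_k):2\leq k\leq|\mathcal A|,(\mathcal C_1,\dots,\mathcal C_k)\in\mathscr P_k(\mathcal A)\}$. *)

theory Defs
  imports "HOL-Probability.Probability_Mass_Function" "HOL-Library.FuncSet"
begin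

(* The source X_M = (X_1,...,X_m) is given by its joint (single-letter) distribution
   P :: (nat => 'a) pmf; a sample x gives X_i = x i for i in M = {1..m}. *)

definition Mset :: "nat \<Rightarrow> nat set" where
  "Mset m = {1..m}"

definition marg :: "(nat \<Rightarrow> 'a) pmf \<Rightarrow> nat set \<Rightarrow> (nat \<Rightarrow> 'a) pmf" where
  "marg P B = map_pmf (\<lambda>x. restrict x B) P"

definition ent :: "(nat \<Rightarrow> 'a) pmf \<Rightarrow> nat set \<Rightarrow> real" where
  "ent P B = (\<Sum>y\<in>set_pmf (marg P B). - pmf (marg P B) y * log 2 (pmf (marg P B) y))"

(* h(B) = H(X_B | X_{B^c}) = H(X_M) - H(X_{M - B}) *)
definition hc :: "nat \<Rightarrow> (nat \<Rightarrow> 'a) pmf \<Rightarrow> nat set \<Rightarrow> real" where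
  "hc m P B = ent P (Mset m) - ent P (Mset m - B)"

definition Bfam :: "nat \<Rightarrow> nat set \<Rightarrow> nat set set" where
  "Bfam m A = {B. B \<subset> Mset m \<and> B \<noteq> {} \<and> \<not> A \<subseteq> B}"

definition SW :: "nat \<Rightarrow> (nat \<Rightarrow> 'a) pmf \<Rightarrow> (nat \<Rightarrow> real) \<Rightarrow> nat set \<Rightarrow> real" where
  "SW m P R B = (\<Sum>j\<in>B. R j) - hc m P B"

(* rate tuples R_M are functions nat => real; only the values on M matter *)
definition Rreg :: "nat \<Rightarrow> (nat \<Rightarrow> 'a) pmf \<Rightarrow> nat set \<Rightarrow> (nat \<Rightarrow> real) set" where
  "Rreg m P A = {R. \<forall>B\<in>Bfam m A. SW m P R B \<ge> 0}"

definition R_CO :: "nat \<Rightarrow> (nat \<Rightarrow> 'a) pmf \<Rightarrow> nat set \<Rightarrow> real" where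
  "R_CO m P A = Inf ((\<lambda>R. \<Sum>i\<in>Mset m. R i) ` Rreg m P A)"

definition C_SK :: "nat \<Rightarrow> (nat \<Rightarrow> 'a) pmf \<Rightarrow> nat set \<Rightarrow> real" where
  "C_SK m P A = ent P (Mset m) - R_CO m P A"

(* tuples (C_1,...,C_k) represented by C :: nat => nat set, indices 1..k *)
definition Pk :: "nat \<Rightarrow> nat \<Rightarrow> nat set \<Rightarrow> (nat \<Rightarrow> nat set) set" where
  "Pk m k A = {C. (\<forall>i\<in>{1..k}. \<forall>j\<in>{1..k}. i \<noteq> j \<longrightarrow> C i \<inter> C j = {})
                 \<and> (\<Union>i\<in>{1..k}. C i) = Mset m
                 \<and> (\<forall>i\<in>{1..k}. C i \<subseteq> Mset m \<and> C i \<inter> A \<noteq> {})}"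

definition Ipart :: "nat \<Rightarrow> (nat \<Rightarrow> 'a) pmf \<Rightarrow> nat \<Rightarrow> (nat \<Rightarrow> nat set) \<Rightarrow> real" where
  "Ipart m P k C = ((\<Sum>i\<in>{1..k}. ent P (C i)) - ent P (Mset m)) / (real k - 1)"

definition I_A :: "nat \<Rightarrow> (nat \<Rightarrow> 'a) pmf \<Rightarrow> nat set \<Rightarrow> real" where
  "I_A m P A = Inf {Ipart m P k C | k C. 2 \<le> k \<and> k \<le> card A \<and> C \<in> Pk m k A}"

end

theory Submission imports Defs "HOL-Analysis.Analysis" begin

text \<open>Summing the Slepian-Wolf slacks over the complements of the parts of a partition
  \<open>(C\<^sub>1, \<dots>, C\<^sub>k)\<close> gives \<open>(k - 1) (\<Sum>R - H(X\<^sub>M) + I(C\<^sub>1, \<dots>, C\<^sub>k))\<close>, since every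
  \<open>j \<in> M\<close> lies in exactly \<open>k - 1\<close> of the complements. The complements belong to the constraint
  family, so each slack of an admissible rate tuple is nonnegative: this is the weak duality
  \<open>R\<^sub>C\<^sub>O \<ge> H(X\<^sub>M) - I(C\<^sub>1, \<dots>, C\<^sub>k)\<close>, and equality for given \<open>R\<close> and \<open>C\<close> holds
  exactly when all \<open>k\<close> slacks vanish. Both optima are attained (\<open>I(A)\<close> is a minimum over a
  finite set, \<open>R\<^sub>C\<^sub>O\<close> a minimum of a linear function over a closed region that may be cut down
  to a compact box), so \<open>C\<^sub>S\<^sub>K(A) \<le> I(A)\<close> with equality iff an optimal rate tuple and an
  optimal partition meet with all slacks zero.\<close>

lemma finite_Mset [simp]: "finite (Mset m)"
  by (simp add: Mset_def)

lemma continuous_attains_inf_via_compact: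
  fixes f :: "'a::topological_space \<Rightarrow> 'b::linorder_topology"
  assumes "closed S" "compact K" "x0 \<in> S" "continuous_on (S \<inter> K) f"
    and reduce: "\<And>x. x \<in> S \<Longrightarrow> f x \<le> f x0 \<Longrightarrow> \<exists>y\<in>S \<inter> K. f y \<le> f x"
  shows "\<exists>z\<in>S. \<forall>y\<in>S. f z \<le> f y"
proof -
  have "S \<inter> K \<noteq> {}" using reduce[OF \<open>x0 \<in> S\<close>] by blast
  then obtain z where z: "z \<in> S \<inter> K" "\<And>y. y \<in> S \<inter> K \<Longrightarrow> f z \<le> f y"
    using continuous_attains_inf[OF compact_Int_closed[OF \<open>compact K\<close> \<open>closed S\<close>]]
      assms(4) by (metis inf_commute)
  have "f z \<le> f y" if "y \<in> S" for y
  proof (cases "f y \<le> f x0")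
    case True
    then show ?thesis using reduce[OF \<open>y \<in> S\<close>] z(2) by (meson order_trans)
  next
    case False
    then show ?thesis using reduce[OF \<open>x0 \<in> S\<close>] z(2) by (meson order_trans le_cases)
  qed
  then show ?thesis using z(1) by blast
qed

lemma compact_PiE_UNIV:
  assumes "\<And>i. compact (K i)"
  shows "compact (PiE UNIV K)"
proof -
  have "compactin (product_topology (\<lambda>_. euclidean) UNIV) (PiE UNIV K)"
    using assms by (subst compactin_PiE) auto
  then show ?thesis by (simp add: euclidean_product_topology)
qed

lemma Pk_subset_Mset: "C \<in> Pk m k A \<Longrightarrow> i \<in> {1..k} \<Longrightarrow> C i \<subseteq> Mset m"
  by (simp add: Pk_def)

lemma Pk_2_nonempty:
  assumes "A \<subseteq> Mset m" "card A \<ge> 2"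
  shows "\<exists>C. C \<in> Pk m 2 A"
proof -
  obtain a where a: "a \<in> A" using assms(2) by fastforce
  have "A - {a} \<noteq> {}"
    using assms(2) card_mono[of "{a}" A] by fastforce
  define C where "C = (\<lambda>i::nat. if i = 1 then {a} else Mset m - {a})"
  have "{1..2::nat} = {1, 2}" by auto
  then have "C \<in> Pk m 2 A" unfolding Pk_def C_def using a \<open>A - {a} \<noteq> {}\<close> assms(1) by auto
  then show ?thesis by blast
qed

lemma sum_Diff_Pk:
  fixes R :: "nat \<Rightarrow> real"
  assumes C: "C \<in> Pk m k A"
  shows "(\<Sum>i\<in>{1..k}. \<Sum>j\<in>Mset m - C i. R j) = (real k - 1) * (\<Sum>j\<in>Mset m. R j)"
proof -
  have sub: "\<And>i. i \<in> {1..k} \<Longrightarrow> C i \<subseteq> Mset m" using C Pk_subset_Mset by blast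
  then have fin: "\<And>i. i \<in> {1..k} \<Longrightarrow> finite (C i)" by (meson finite_Mset finite_subset)
  have "(\<Sum>i\<in>{1..k}. \<Sum>j\<in>Mset m - C i. R j)
      = (\<Sum>i\<in>{1..k}. (\<Sum>j\<in>Mset m. R j) - (\<Sum>j\<in>C i. R j))"
    by (rule sum.cong) (auto simp: sum_diff sub)
  also have "\<dots> = real k * (\<Sum>j\<in>Mset m. R j) - (\<Sum>i\<in>{1..k}. \<Sum>j\<in>C i. R j)"
    by (simp add: sum_subtractf)
  also have "(\<Sum>i\<in>{1..k}. \<Sum>j\<in>C i. R j) = (\<Sum>j\<in>(\<Union>i\<in>{1..k}. C i). R j)"
    by (rule sum.UNION_disjoint[symmetric]) (use fin C in \<open>auto simp: Pk_def\<close>)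
  also have "(\<Union>i\<in>{1..k}. C i) = Mset m" using C by (simp add: Pk_def)
  finally show ?thesis by (simp add: algebra_simps)
qed

lemma sum_SW_Diff_Pk:
  assumes C: "C \<in> Pk m k A" and k: "k \<ge> 2"
  shows "(\<Sum>i\<in>{1..k}. SW m P R (Mset m - C i))
    = (real k - 1) * ((\<Sum>j\<in>Mset m. R j) - ent P (Mset m) + Ipart m P k C)"
proof -
  have "Mset m - (Mset m - C i) = C i" if "i \<in> {1..k}" for i
    using C Pk_subset_Mset that by blast
  then have "(\<Sum>i\<in>{1..k}. SW m P R (Mset m - C i))
      = (\<Sum>i\<in>{1..k}. (\<Sum>j\<in>Mset m - C i. R j) - ent P (Mset m) + ent P (C i))"
    by (intro sum.cong) (auto simp: SW_def hc_def)
  also have "\<dots> = (real k - 1) * (\<Sum>j\<in>Mset m. R j) - real k * ent P (Mset m)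
      + (\<Sum>i\<in>{1..k}. ent P (C i))"
    unfolding sum.distrib sum_subtractf sum_Diff_Pk[OF C] by simp
  also have "(\<Sum>i\<in>{1..k}. ent P (C i)) = (real k - 1) * Ipart m P k C + ent P (Mset m)"
    using k by (simp add: Ipart_def)
  finally show ?thesis by (simp add: algebra_simps)
qed

lemma Diff_Pk_in_Bfam:
  assumes C: "C \<in> Pk m k A" and k: "k \<ge> 2" and i: "i \<in> {1..k}"
  shows "Mset m - C i \<in> Bfam m A"
proof -
  obtain j where j: "j \<in> {1..k}" "j \<noteq> i"
    using k i by (intro that[of "if i = 1 then 2 else 1"]) auto
  have "C j \<inter> A \<noteq> {}" "C j \<subseteq> Mset m" "C i \<inter> C j = {}" "C i \<inter> A \<noteq> {}" "C i \<subseteq> Mset m"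
    using C i j by (auto simp: Pk_def)
  then show ?thesis unfolding Bfam_def by blast
qed

lemma SW_Diff_Pk_eq_0_iff:
  assumes C: "C \<in> Pk m k A" and k: "k \<ge> 2" and R: "R \<in> Rreg m P A"
  shows "(\<forall>i\<in>{1..k}. SW m P R (Mset m - C i) = 0)
    \<longleftrightarrow> (\<Sum>j\<in>Mset m. R j) = ent P (Mset m) - Ipart m P k C"
proof -
  have "\<forall>i\<in>{1..k}. 0 \<le> SW m P R (Mset m - C i)"
    using R Diff_Pk_in_Bfam[OF C k] by (auto simp: Rreg_def)
  then have "(\<forall>i\<in>{1..k}. SW m P R (Mset m - C i) = 0)
      \<longleftrightarrow> (\<Sum>i\<in>{1..k}. SW m P R (Mset m - C i)) = 0"
    by (intro sum_nonneg_eq_0_iff[symmetric]) auto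
  also have "\<dots> \<longleftrightarrow> (real k - 1) * ((\<Sum>j\<in>Mset m. R j) - ent P (Mset m) + Ipart m P k C) = 0"
    unfolding sum_SW_Diff_Pk[OF C k] ..
  also have "\<dots> \<longleftrightarrow> (\<Sum>j\<in>Mset m. R j) = ent P (Mset m) - Ipart m P k C"
    using k by (auto simp: mult_eq_0_iff)
  finally show ?thesis .
qed

lemma sum_Rreg_ge:
  assumes C: "C \<in> Pk m k A" and k: "k \<ge> 2" and R: "R \<in> Rreg m P A"
  shows "ent P (Mset m) - Ipart m P k C \<le> (\<Sum>j\<in>Mset m. R j)"
proof -
  have "0 \<le> (\<Sum>i\<in>{1..k}. SW m P R (Mset m - C i))"
    using R Diff_Pk_in_Bfam[OF C k] by (auto simp: Rreg_def intro!: sum_nonneg)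
  then have "0 \<le> (real k - 1) * ((\<Sum>j\<in>Mset m. R j) - ent P (Mset m) + Ipart m P k C)"
    unfolding sum_SW_Diff_Pk[OF C k] .
  moreover have "0 < real k - 1" using k by simp
  ultimately show ?thesis by (simp add: zero_le_mult_iff)
qed

lemma finite_Ipart_values:
  "finite {Ipart m P k C | k C. 2 \<le> k \<and> k \<le> card A \<and> C \<in> Pk m k A}"
proof -
  let ?D = "SIGMA k:{2..card A}. PiE {1..k} (\<lambda>_. Pow (Mset m))"
  have "Ipart m P k C = (\<lambda>(k, D). Ipart m P k D) (k, restrict C {1..k})
    \<and> (k, restrict C {1..k}) \<in> ?D" if "2 \<le> k" "k \<le> card A" "C \<in> Pk m k A" for k C
    using that Pk_subset_Mset[OF that(3)] by (auto simp: Ipart_def)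
  then have "{Ipart m P k C | k C. 2 \<le> k \<and> k \<le> card A \<and> C \<in> Pk m k A}
      \<subseteq> (\<lambda>(k, D). Ipart m P k D) ` ?D"
    by blast
  moreover have "finite ?D" by (intro finite_SigmaI finite_PiE) auto
  ultimately show ?thesis using finite_subset by blast
qed

lemma I_A_attained:
  assumes "A \<subseteq> Mset m" "card A \<ge> 2"
  shows "\<exists>k C. 2 \<le> k \<and> k \<le> card A \<and> C \<in> Pk m k A \<and> I_A m P A = Ipart m P k C
    \<and> (\<forall>k' C'. 2 \<le> k' \<and> k' \<le> card A \<and> C' \<in> Pk m k' A \<longrightarrow> Ipart m P k C \<le> Ipart m P k' C')"
proof -
  let ?V = "{Ipart m P k C | k C. 2 \<le> k \<and> k \<le> card A \<and> C \<in> Pk m k A}"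
  have fin: "finite ?V" by (rule finite_Ipart_values)
  have ne: "?V \<noteq> {}" using Pk_2_nonempty[OF assms] assms(2) by blast
  obtain k C where kC: "2 \<le> k" "k \<le> card A" "C \<in> Pk m k A" "Min ?V = Ipart m P k C"
    using Min_in[OF fin ne] by blast
  have "I_A m P A = Min ?V" unfolding I_A_def by (rule cInf_eq_Min[OF fin ne])
  moreover have "Min ?V \<le> Ipart m P k' C'" if "2 \<le> k'" "k' \<le> card A" "C' \<in> Pk m k' A" for k' C'
    using Min_le[OF fin] that by blast
  ultimately show ?thesis using kC by auto
qed

lemma Rreg_nonempty: "\<exists>R. R \<in> Rreg m P A"
proof -
  define c where "c = (\<Sum>B\<in>Pow (Mset m). \<bar>hc m P B\<bar>)"
  have "0 \<le> SW m P (\<lambda>_. c) B" if "B \<in> Bfam m A" for B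
  proof -
    have B: "B \<subseteq> Mset m" "B \<noteq> {}" using that by (auto simp: Bfam_def)
    then have "finite B" by (meson finite_Mset finite_subset)
    with B(2) have "1 \<le> card B" by (simp add: Suc_le_eq card_gt_0_iff)
    have "hc m P B \<le> \<bar>hc m P B\<bar>" by (rule abs_ge_self)
    also have "\<dots> \<le> c" unfolding c_def using B by (intro member_le_sum) auto
    also have "\<dots> \<le> real (card B) * c"
      using \<open>1 \<le> card B\<close> mult_right_mono[of 1 "real (card B)" c] by (simp add: c_def sum_nonneg)
    finally show ?thesis by (simp add: SW_def)
  qed
  then show ?thesis by (auto simp: Rreg_def)
qed

lemma closed_Rreg: "closed (Rreg m P A)"
proof -
  have "Rreg m P A = (\<Inter>B\<in>Bfam m A. {R. hc m P B \<le> (\<Sum>j\<in>B. R j)})"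
    by (auto simp: Rreg_def SW_def)
  also have "closed \<dots>"
    by (intro closed_INT ballI closed_Collect_le continuous_on_const continuous_on_sum
        continuous_on_product_coordinates)
  finally show ?thesis .
qed

lemma Rreg_zero_outside:
  assumes "R \<in> Rreg m P A"
  shows "(\<lambda>j. if j \<in> Mset m then R j else 0) \<in> Rreg m P A"
proof -
  have "SW m P (\<lambda>j. if j \<in> Mset m then R j else 0) B = SW m P R B" if "B \<in> Bfam m A" for B
    using that unfolding SW_def Bfam_def by (auto intro!: sum.cong)
  then show ?thesis using assms by (simp add: Rreg_def)
qed

lemma singleton_in_Bfam:
  assumes "m \<ge> 2" "card A \<ge> 2" "j \<in> Mset m"
  shows "{j} \<in> Bfam m A"
proof -
  have "Mset m \<noteq> {j}" using assms(1) by (auto simp: Mset_def)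
  moreover have "\<not> A \<subseteq> {j}"
  proof
    assume "A \<subseteq> {j}"
    then have "card A \<le> 1" using card_mono[of "{j}" A] by simp
    with assms(2) show False by simp
  qed
  ultimately show ?thesis using assms(3) unfolding Bfam_def by auto
qed

text \<open>Every coordinate is bounded below by its singleton constraint, hence above by the total
  rate minus the lower bounds of the other coordinates.\<close>

lemma Rreg_coordinate_bounds:
  assumes "m \<ge> 2" "card A \<ge> 2" "R \<in> Rreg m P A" "j \<in> Mset m"
  defines "c \<equiv> \<Sum>i\<in>Mset m. \<bar>hc m P {i}\<bar>"
  shows "R j \<in> {- c .. (\<Sum>i\<in>Mset m. R i) + c}"
proof -
  have lo: "hc m P {i} \<le> R i" if "i \<in> Mset m" for i
    using assms(3) singleton_in_Bfam[OF assms(1,2) that] by (auto simp: Rreg_def SW_def)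
  have "\<bar>hc m P {j}\<bar> \<le> c"
    unfolding c_def using assms(4) by (intro member_le_sum) auto
  moreover have "- (\<Sum>i\<in>Mset m - {j}. R i) \<le> c"
  proof -
    have "(\<Sum>i\<in>Mset m - {j}. hc m P {i}) \<le> (\<Sum>i\<in>Mset m - {j}. R i)"
      using lo by (intro sum_mono) auto
    moreover have "- (\<Sum>i\<in>Mset m - {j}. hc m P {i}) \<le> (\<Sum>i\<in>Mset m - {j}. \<bar>hc m P {i}\<bar>)"
      by (rule order_trans[OF abs_ge_minus_self sum_abs])
    moreover have "(\<Sum>i\<in>Mset m - {j}. \<bar>hc m P {i}\<bar>) \<le> c"
      unfolding c_def by (intro sum_mono2) auto
    ultimately show ?thesis by linarith
  qed
  moreover have "(\<Sum>i\<in>Mset m. R i) = R j + (\<Sum>i\<in>Mset m - {j}. R i)"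
    using assms(4) by (simp add: sum.remove)
  ultimately show ?thesis using lo[OF assms(4)] by auto
qed

lemma Rreg_min_sum_exists:
  assumes "m \<ge> 2" "card A \<ge> 2"
  shows "\<exists>R\<in>Rreg m P A. \<forall>R'\<in>Rreg m P A. (\<Sum>j\<in>Mset m. R j) \<le> (\<Sum>j\<in>Mset m. R' j)"
proof -
  let ?S = "\<lambda>R::nat \<Rightarrow> real. \<Sum>j\<in>Mset m. R j"
  obtain R0 where R0: "R0 \<in> Rreg m P A" using Rreg_nonempty by blast
  define c where "c = (\<Sum>i\<in>Mset m. \<bar>hc m P {i}\<bar>)"
  \<comment> \<open>Coordinates outside \<open>M\<close> are unconstrained, so they are pinned to 0 to get a compact box.\<close>
  define K where "K = PiE UNIV (\<lambda>j. if j \<in> Mset m then {- c .. ?S R0 + c} else {0})"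
  have "\<exists>R'\<in>Rreg m P A \<inter> K. ?S R' \<le> ?S R" if "R \<in> Rreg m P A" "?S R \<le> ?S R0" for R
  proof (intro bexI)
    let ?R' = "\<lambda>j. if j \<in> Mset m then R j else 0"
    have "R j \<in> {- c .. ?S R0 + c}" if "j \<in> Mset m" for j
      using Rreg_coordinate_bounds[OF assms \<open>R \<in> Rreg m P A\<close> that] \<open>?S R \<le> ?S R0\<close>
      by (auto simp: c_def)
    then show "?R' \<in> Rreg m P A \<inter> K"
      using Rreg_zero_outside[OF \<open>R \<in> Rreg m P A\<close>] by (auto simp: K_def)
    show "?S ?R' \<le> ?S R" by simp
  qed
  moreover have "compact K" unfolding K_def by (intro compact_PiE_UNIV) auto
  moreover have "continuous_on (Rreg m P A \<inter> K) ?S"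
    by (intro continuous_on_sum continuous_on_subset[OF continuous_on_product_coordinates]) auto
  ultimately show ?thesis
    using continuous_attains_inf_via_compact[OF closed_Rreg _ R0] by blast
qed

theorem proposition1:
  fixes m :: nat and P :: "(nat \<Rightarrow> 'a) pmf" and A :: "nat set"
  assumes "m \<ge> 2"
    and "finite (set_pmf P)"
    and "A \<subseteq> Mset m"
    and "card A \<ge> 2"
  shows "C_SK m P A = I_A m P A \<longleftrightarrow>
    (\<exists>k C R. 2 \<le> k \<and> k \<le> card A \<and> C \<in> Pk m k A \<and> R \<in> Rreg m P A \<and>
       (\<forall>i\<in>{1..k}. SW m P R (Mset m - C i) = 0))"
proof -
  obtain R0 where R0: "R0 \<in> Rreg m P A"
    and R0_min: "\<And>R. R \<in> Rreg m P A \<Longrightarrow> (\<Sum>j\<in>Mset m. R0 j) \<le> (\<Sum>j\<in>Mset m. R j)"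
    using Rreg_min_sum_exists[OF assms(1,4)] by blast
  have C_SK: "C_SK m P A = ent P (Mset m) - (\<Sum>j\<in>Mset m. R0 j)"
    unfolding C_SK_def R_CO_def using R0 R0_min by (subst cInf_eq_minimum) auto
  obtain k0 C0 where k0: "2 \<le> k0" "k0 \<le> card A" "C0 \<in> Pk m k0 A"
    and I_A: "I_A m P A = Ipart m P k0 C0"
    and C0_min: "\<And>k C. 2 \<le> k \<Longrightarrow> k \<le> card A \<Longrightarrow> C \<in> Pk m k A \<Longrightarrow> Ipart m P k0 C0 \<le> Ipart m P k C"
    using I_A_attained[OF assms(3,4)] by blast
  have weak_duality: "C_SK m P A \<le> I_A m P A"
    using sum_Rreg_ge[OF k0(3,1) R0] by (simp add: C_SK I_A)
  show ?thesis
  proof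
    assume "C_SK m P A = I_A m P A"
    then have "\<forall>i\<in>{1..k0}. SW m P R0 (Mset m - C0 i) = 0"
      using SW_Diff_Pk_eq_0_iff[OF k0(3,1) R0] by (simp add: C_SK I_A)
    then show "\<exists>k C R. 2 \<le> k \<and> k \<le> card A \<and> C \<in> Pk m k A \<and> R \<in> Rreg m P A \<and>
       (\<forall>i\<in>{1..k}. SW m P R (Mset m - C i) = 0)" using k0 R0 by blast
  next
    assume "\<exists>k C R. 2 \<le> k \<and> k \<le> card A \<and> C \<in> Pk m k A \<and> R \<in> Rreg m P A \<and>
       (\<forall>i\<in>{1..k}. SW m P R (Mset m - C i) = 0)"
    then obtain k C R where kCR: "2 \<le> k" "k \<le> card A" "C \<in> Pk m k A" "R \<in> Rreg m P A"
      and "\<forall>i\<in>{1..k}. SW m P R (Mset m - C i) = 0" by blast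
    then have "(\<Sum>j\<in>Mset m. R j) = ent P (Mset m) - Ipart m P k C"
      using SW_Diff_Pk_eq_0_iff[OF kCR(3,1,4)] by blast
    then have "I_A m P A \<le> C_SK m P A"
      using R0_min[OF kCR(4)] C0_min[OF kCR(1-3)] by (simp add: C_SK I_A)
    with weak_duality show "C_SK m P A = I_A m P A" by simp
  qed
qed

end
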